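(* Let $0\le\lambda<n$ and $1\le p<\infty$. Each of the subsets $V_0L^{p,\lambda}$, $V_\infty L^{p,\lambda}$ and $V^{(\ast)}L^{p,\lambda}$ is closed in $L^{p,\lambda}(\mathbb{R}^n)$; consequently $V^{(\ast)}_{0,\infty}L^{p,\lambda}$ is closed in $L^{p,\lambda}(\mathbb{R}^n)$.
   Context: $B(x,r)$ is the open ball in $\mathbb{R}^n$ with center $x$ and radius $r$. For $f\in L^1_{\mathrm{loc}}(\mathbb{R}^n)$ let $\mathfrak{M}_{p,\lambda}(f;x,r):=r^{-\lambda}\int_{B(x,r)}|f(y)|^p\,dy$. The homogeneous Morrey space $L^{p,\lambda}(\mathbb{R}^n)$ is the Banach space of $f\in L^p_{\mathrm{loc}}(\mathbb{R}^n)$ with $\|f\|_{p,\lambda}:=\sup_{x\in\mathbb{R}^n,\,r>0}\mathfrak{M}_{p,\lambda}(f;x,r)^{1/p}<\infty$. Define the subsets of $L^{p,\lambda}(\mathbb{R}^n)$: $V_0L^{p,\lambda}=\{f:\lim_{r\to0}\sup_{x}\mathfrak{M}_{p,\lambda}(f;x,r)=0\}$; $V_\infty L^{p,\lambda}=\{f:\lim_{r\to\infty}\sup_{x}\mathfrak{M}_{p,\lambda}(f;x,r)=0\}$; $V^{(\ast)}L^{p,\lambda}=\{f:\lim_{N\to\infty}\mathcal{A}_{N,p}(f)=0\}$, where $\mathcal{A}_{N,p}(f):=\sup_{x\in\mathbb{R}^n}\int_{B(x,1)}|f(y)|^p\chi_{\mathbb{R}^n\setminus B(0,N)}(y)\,dy$,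 $N\in\mathbb{N}$. Finally $V^{(\ast)}_{0,\infty}L^{p,\lambda}:=V_0L^{p,\lambda}\cap V_\infty L^{p,\lambda}\cap V^{(\ast)}L^{p,\lambda}$. *)

theory Defs
  imports "HOL-Analysis.Analysis"
begin

definition morrey_M :: "real \<Rightarrow> real \<Rightarrow> ('a::euclidean_space \<Rightarrow> real) \<Rightarrow> 'a \<Rightarrow> real \<Rightarrow> ennreal" where
  "morrey_M p lam f x r =
     ennreal (r powr (- lam)) * (\<integral>\<^sup>+ y. ennreal (\<bar>f y\<bar> powr p) * indicator (ball x r) y \<partial>lebesgue)"

definition morrey_sup :: "real \<Rightarrow> real \<Rightarrow> ('a::euclidean_space \<Rightarrow> real) \<Rightarrow> ennreal" where
  "morrey_sup p lam f = (SUP x\<in>UNIV. SUP r\<in>{0<..}. morrey_M p lam f x r)"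

text \<open>The homogeneous Morrey space L^{p,lambda}.  Finiteness of the supremum forces
  f to be locally p-integrable.\<close>
definition morrey_space :: "real \<Rightarrow> real \<Rightarrow> ('a::euclidean_space \<Rightarrow> real) set" where
  "morrey_space p lam = {f. f \<in> borel_measurable lebesgue \<and> morrey_sup p lam f < \<infinity>}"

definition morrey_norm :: "real \<Rightarrow> real \<Rightarrow> ('a::euclidean_space \<Rightarrow> real) \<Rightarrow> real" where
  "morrey_norm p lam f = enn2real (morrey_sup p lam f) powr (1 / p)"

definition V0_morrey :: "real \<Rightarrow> real \<Rightarrow> ('a::euclidean_space \<Rightarrow> real) set" where
  "V0_morrey p lam = {f \<in> morrey_space p lam.
     ((\<lambda>r. SUP x\<in>UNIV. morrey_M p lam f x r) \<longlongrightarrow> 0) (at_right 0)}"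

definition Vinf_morrey :: "real \<Rightarrow> real \<Rightarrow> ('a::euclidean_space \<Rightarrow> real) set" where
  "Vinf_morrey p lam = {f \<in> morrey_space p lam.
     ((\<lambda>r. SUP x\<in>UNIV. morrey_M p lam f x r) \<longlongrightarrow> 0) at_top}"

definition morrey_A :: "real \<Rightarrow> ('a::euclidean_space \<Rightarrow> real) \<Rightarrow> nat \<Rightarrow> ennreal" where
  "morrey_A p f N = (SUP x\<in>UNIV. \<integral>\<^sup>+ y. ennreal (\<bar>f y\<bar> powr p) * indicator (ball x 1) y
                        * indicator (UNIV - ball 0 (real N)) y \<partial>lebesgue)"

definition Vstar_morrey :: "real \<Rightarrow> real \<Rightarrow> ('a::euclidean_space \<Rightarrow> real) set" where
  "Vstar_morrey p lam = {f \<in> morrey_space p lam. (morrey_A p f \<longlongrightarrow> 0) sequentially}"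

definition V0inf_star_morrey :: "real \<Rightarrow> real \<Rightarrow> ('a::euclidean_space \<Rightarrow> real) set" where
  "V0inf_star_morrey p lam = V0_morrey p lam \<inter> Vinf_morrey p lam \<inter> Vstar_morrey p lam"

text \<open>Closedness of a subset of the (semi)normed space L^{p,lambda}: limits in the Morrey
  norm of sequences from S stay in S (sequential closedness = closedness in a metric space).\<close>
definition morrey_closed :: "real \<Rightarrow> real \<Rightarrow> ('a::euclidean_space \<Rightarrow> real) set \<Rightarrow> bool" where
  "morrey_closed p lam S \<longleftrightarrow>
     (\<forall>g f. (\<forall>k. g k \<in> S) \<and> f \<in> morrey_space p lam \<and>
        ((\<lambda>k. morrey_norm p lam (\<lambda>y. g k y - f y)) \<longlongrightarrow> 0) sequentially \<longrightarrow> f \<in> S)"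

end

theory Submission imports Defs begin

text \<open>All three vanishing conditions are of the form \<open>\<Phi> f \<rightarrow> 0\<close> for a functional \<open>\<Phi>\<close> dominated
  by the Morrey functional and satisfying the quasi-triangle inequality
  \<open>\<Phi> f \<le> 2\<^sup>p (\<Phi> g + \<parallel>g - f\<parallel>\<^sup>p)\<close>, which comes from \<open>|a + b|\<^sup>p \<le> 2\<^sup>p (|a|\<^sup>p + |b|\<^sup>p)\<close>.
  If \<open>g\<^sub>k \<rightarrow> f\<close> in the Morrey norm, choose \<open>k\<close> with \<open>\<parallel>g\<^sub>k - f\<parallel>\<^sup>p\<close> small and then let
  \<open>\<Phi> g\<^sub>k\<close> become small.\<close>

lemma abs_powr_le_two_powr_sum:
  fixes a b c p :: real
  assumes "p > 0" "\<bar>a\<bar> \<le> \<bar>b\<bar> + \<bar>c\<bar>"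
  shows "\<bar>a\<bar> powr p \<le> 2 powr p * (\<bar>b\<bar> powr p + \<bar>c\<bar> powr p)"
proof -
  have "\<bar>a\<bar> powr p \<le> (2 * max \<bar>b\<bar> \<bar>c\<bar>) powr p"
    using assms by (intro powr_mono2) auto
  also have "\<dots> = 2 powr p * max \<bar>b\<bar> \<bar>c\<bar> powr p"
    by (simp add: powr_mult)
  also have "\<dots> \<le> 2 powr p * (\<bar>b\<bar> powr p + \<bar>c\<bar> powr p)"
    by (intro mult_left_mono) (auto simp: max_def)
  finally show ?thesis .
qed

lemma nn_integral_abs_powr_quasi_triangle:
  fixes u v w :: "'a \<Rightarrow> real" and J :: "'a \<Rightarrow> ennreal"
  assumes "p > 0" "u \<in> borel_measurable M" "v \<in> borel_measurable M" "J \<in> borel_measurable M"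
    and "\<And>y. \<bar>w y\<bar> \<le> \<bar>u y\<bar> + \<bar>v y\<bar>"
  shows "(\<integral>\<^sup>+ y. ennreal (\<bar>w y\<bar> powr p) * J y \<partial>M) \<le>
     ennreal (2 powr p) * ((\<integral>\<^sup>+ y. ennreal (\<bar>u y\<bar> powr p) * J y \<partial>M)
        + (\<integral>\<^sup>+ y. ennreal (\<bar>v y\<bar> powr p) * J y \<partial>M))"
proof -
  have "ennreal (\<bar>w y\<bar> powr p) * J y \<le>
      ennreal (2 powr p) * (ennreal (\<bar>u y\<bar> powr p) * J y + ennreal (\<bar>v y\<bar> powr p) * J y)" for y
  proof -
    have "ennreal (\<bar>w y\<bar> powr p) \<le> ennreal (2 powr p) * (ennreal (\<bar>u y\<bar> powr p) + ennreal (\<bar>v y\<bar> powr p))"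
      using abs_powr_le_two_powr_sum[OF assms(1,5)]
      by (simp add: ennreal_leI flip: ennreal_mult ennreal_plus)
    then have "ennreal (\<bar>w y\<bar> powr p) * J y \<le>
        ennreal (2 powr p) * (ennreal (\<bar>u y\<bar> powr p) + ennreal (\<bar>v y\<bar> powr p)) * J y"
      by (rule mult_right_mono) simp
    then show ?thesis
      by (simp add: algebra_simps)
  qed
  then have "(\<integral>\<^sup>+ y. ennreal (\<bar>w y\<bar> powr p) * J y \<partial>M) \<le>
      (\<integral>\<^sup>+ y. ennreal (2 powr p) * (ennreal (\<bar>u y\<bar> powr p) * J y + ennreal (\<bar>v y\<bar> powr p) * J y) \<partial>M)"
    by (intro nn_integral_mono)
  also have "\<dots> = ennreal (2 powr p) * ((\<integral>\<^sup>+ y. ennreal (\<bar>u y\<bar> powr p) * J y \<partial>M)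
        + (\<integral>\<^sup>+ y. ennreal (\<bar>v y\<bar> powr p) * J y \<partial>M))"
    using assms(2-4) by (simp add: nn_integral_cmult nn_integral_add)
  finally show ?thesis .
qed

lemma morrey_M_quasi_triangle:
  fixes u v w :: "'a::euclidean_space \<Rightarrow> real"
  assumes "p > 0" "u \<in> borel_measurable lebesgue" "v \<in> borel_measurable lebesgue"
    and "\<And>y. \<bar>w y\<bar> \<le> \<bar>u y\<bar> + \<bar>v y\<bar>"
  shows "morrey_M p lam w x r \<le> ennreal (2 powr p) * (morrey_M p lam u x r + morrey_M p lam v x r)"
proof -
  have "morrey_M p lam w x r \<le> ennreal (r powr (- lam)) * (ennreal (2 powr p) *
      ((\<integral>\<^sup>+ y. ennreal (\<bar>u y\<bar> powr p) * indicator (ball x r) y \<partial>lebesgue)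
        + (\<integral>\<^sup>+ y. ennreal (\<bar>v y\<bar> powr p) * indicator (ball x r) y \<partial>lebesgue)))"
    unfolding morrey_M_def
    by (intro mult_left_mono nn_integral_abs_powr_quasi_triangle assms borel_measurable_indicator) auto
  then show ?thesis
    unfolding morrey_M_def by (simp add: algebra_simps)
qed

lemma morrey_A_quasi_triangle:
  fixes u v w :: "'a::euclidean_space \<Rightarrow> real"
  assumes "p > 0" "u \<in> borel_measurable lebesgue" "v \<in> borel_measurable lebesgue"
    and "\<And>y. \<bar>w y\<bar> \<le> \<bar>u y\<bar> + \<bar>v y\<bar>"
  shows "morrey_A p w N \<le> ennreal (2 powr p) * (morrey_A p u N + morrey_A p v N)"
proof -
  define J :: "'a \<Rightarrow> 'a \<Rightarrow> ennreal"
    where "J x = indicator (ball x 1 \<inter> (UNIV - ball 0 (real N)))" for x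
  have A_eq: "morrey_A p h N = (SUP x\<in>UNIV. \<integral>\<^sup>+ y. ennreal (\<bar>h y\<bar> powr p) * J x y \<partial>lebesgue)"
    for h :: "'a \<Rightarrow> real"
    unfolding morrey_A_def J_def by (simp add: indicator_inter_arith mult.assoc)
  have "(\<integral>\<^sup>+ y. ennreal (\<bar>w y\<bar> powr p) * J x y \<partial>lebesgue)
      \<le> ennreal (2 powr p) * (morrey_A p u N + morrey_A p v N)" for x
  proof -
    have "J x \<in> borel_measurable lebesgue"
      unfolding J_def by (intro borel_measurable_indicator) auto
    then have "(\<integral>\<^sup>+ y. ennreal (\<bar>w y\<bar> powr p) * J x y \<partial>lebesgue) \<le> ennreal (2 powr p) *
        ((\<integral>\<^sup>+ y. ennreal (\<bar>u y\<bar> powr p) * J x y \<partial>lebesgue)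
          + (\<integral>\<^sup>+ y. ennreal (\<bar>v y\<bar> powr p) * J x y \<partial>lebesgue))"
      by (intro nn_integral_abs_powr_quasi_triangle assms)
    also have "\<dots> \<le> ennreal (2 powr p) * (morrey_A p u N + morrey_A p v N)"
      unfolding A_eq by (intro mult_left_mono add_mono SUP_upper) auto
    finally show ?thesis .
  qed
  then show ?thesis
    unfolding A_eq[of w] by (rule SUP_least)
qed

lemma morrey_M_le_morrey_sup:
  "r > 0 \<Longrightarrow> morrey_M p lam f x r \<le> morrey_sup p lam f"
  unfolding morrey_sup_def by (intro SUP_upper2[of x] SUP_upper) auto

lemma morrey_A_le_morrey_sup: "morrey_A p f N \<le> morrey_sup p lam f"
  unfolding morrey_A_def
proof (rule SUP_least)
  fix x :: 'a
  have "(\<integral>\<^sup>+ y. ennreal (\<bar>f y\<bar> powr p) * indicator (ball x 1) y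
      * indicator (UNIV - ball 0 (real N)) y \<partial>lebesgue) \<le> morrey_M p lam f x 1"
    unfolding morrey_M_def by (auto intro!: nn_integral_mono simp: indicator_def)
  also have "\<dots> \<le> morrey_sup p lam f"
    by (rule morrey_M_le_morrey_sup) simp
  finally show "(\<integral>\<^sup>+ y. ennreal (\<bar>f y\<bar> powr p) * indicator (ball x 1) y
      * indicator (UNIV - ball 0 (real N)) y \<partial>lebesgue) \<le> morrey_sup p lam f" .
qed

lemma morrey_sup_quasi_triangle:
  fixes u v w :: "'a::euclidean_space \<Rightarrow> real"
  assumes "p > 0" "u \<in> borel_measurable lebesgue" "v \<in> borel_measurable lebesgue"
    and "\<And>y. \<bar>w y\<bar> \<le> \<bar>u y\<bar> + \<bar>v y\<bar>"
  shows "morrey_sup p lam w \<le> ennreal (2 powr p) * (morrey_sup p lam u + morrey_sup p lam v)"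
  unfolding morrey_sup_def[of p lam w]
proof (intro SUP_least)
  fix x and r :: real
  assume "r \<in> {0<..}"
  then show "morrey_M p lam w x r \<le> ennreal (2 powr p) * (morrey_sup p lam u + morrey_sup p lam v)"
    using morrey_M_quasi_triangle[OF assms]
    by (meson add_mono greaterThan_iff morrey_M_le_morrey_sup mult_left_mono order_trans zero_le)
qed

lemma sup_morrey_M_quasi_triangle:
  fixes u v w :: "'a::euclidean_space \<Rightarrow> real"
  assumes "p > 0" "u \<in> borel_measurable lebesgue" "v \<in> borel_measurable lebesgue"
    and "\<And>y. \<bar>w y\<bar> \<le> \<bar>u y\<bar> + \<bar>v y\<bar>" and "r > 0"
  shows "(SUP x. morrey_M p lam w x r) \<le>
    ennreal (2 powr p) * ((SUP x. morrey_M p lam u x r) + morrey_sup p lam v)"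
proof (intro SUP_least)
  fix x
  have "morrey_M p lam w x r \<le> ennreal (2 powr p) * (morrey_M p lam u x r + morrey_M p lam v x r)"
    by (rule morrey_M_quasi_triangle[OF assms(1-4)])
  also have "\<dots> \<le> ennreal (2 powr p) * ((SUP x. morrey_M p lam u x r) + morrey_sup p lam v)"
    using assms(5) by (intro mult_left_mono add_mono SUP_upper morrey_M_le_morrey_sup) auto
  finally show "morrey_M p lam w x r \<le> ennreal (2 powr p) * ((SUP x. morrey_M p lam u x r) + morrey_sup p lam v)" .
qed

lemma morrey_sup_diff_tendsto_zero:
  fixes g :: "nat \<Rightarrow> 'a::euclidean_space \<Rightarrow> real"
  assumes p: "p > 0" and g: "\<And>k. g k \<in> morrey_space p lam" and f: "f \<in> morrey_space p lam"
    and lim: "((\<lambda>k. morrey_norm p lam (\<lambda>y. g k y - f y)) \<longlongrightarrow> 0) sequentially"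
  shows "((\<lambda>k. morrey_sup p lam (\<lambda>y. g k y - f y)) \<longlongrightarrow> 0) sequentially"
proof -
  define e where "e k = morrey_sup p lam (\<lambda>y. g k y - f y)" for k
  have e_finite: "e k < \<infinity>" for k
  proof -
    have "e k \<le> ennreal (2 powr p) * (morrey_sup p lam (g k) + morrey_sup p lam f)"
      unfolding e_def using p g[of k] f
      by (intro morrey_sup_quasi_triangle) (auto simp: morrey_space_def)
    also have "\<dots> < \<infinity>"
      using g[of k] f by (auto simp: morrey_space_def ennreal_mult_less_top)
    finally show ?thesis .
  qed
  have "enn2real (e k) = morrey_norm p lam (\<lambda>y. g k y - f y) powr p" for k
    using p unfolding morrey_norm_def e_def
    by (cases "enn2real (morrey_sup p lam (\<lambda>y. g k y - f y)) = 0") (auto simp: powr_powr)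
  moreover have "((\<lambda>k. morrey_norm p lam (\<lambda>y. g k y - f y) powr p) \<longlongrightarrow> 0) sequentially"
    using p lim by (intro tendsto_zero_powrI) (auto simp: morrey_norm_def)
  ultimately have "((\<lambda>k. ennreal (enn2real (e k))) \<longlongrightarrow> ennreal 0) sequentially"
    by (intro tendsto_ennrealI) simp
  then show ?thesis
    using e_finite by (simp add: e_def)
qed

lemma tendsto_zero_by_approximation:
  fixes \<psi> :: "'b \<Rightarrow> ennreal"
  assumes "\<And>k. (\<phi> k \<longlongrightarrow> 0) F" "(e \<longlongrightarrow> 0) sequentially" "C < \<infinity>"
    and "\<And>k. \<forall>\<^sub>F t in F. \<psi> t \<le> C * (\<phi> k t + e k)"
  shows "(\<psi> \<longlongrightarrow> 0) F"
proof (rule order_tendstoI)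
  fix a :: ennreal
  assume "a < 0"
  then show "\<forall>\<^sub>F t in F. a < \<psi> t" by simp
next
  fix a :: ennreal
  assume a: "0 < a"
  have "((\<lambda>k. C * e k) \<longlongrightarrow> C * 0) sequentially"
    using assms(2,3) by (intro ennreal_tendsto_cmult) auto
  then have "\<forall>\<^sub>F k in sequentially. C * e k < a"
    using a by (auto dest: order_tendstoD)
  then obtain k where k: "C * e k < a"
    by (auto simp: eventually_sequentially)
  have "((\<lambda>t. C * (\<phi> k t + e k)) \<longlongrightarrow> C * (0 + e k)) F"
    using assms(1,3) by (intro ennreal_tendsto_cmult tendsto_add) auto
  then have "\<forall>\<^sub>F t in F. C * (\<phi> k t + e k) < a"
    using k by (auto dest: order_tendstoD)
  then show "\<forall>\<^sub>F t in F. \<psi> t < a"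
    using assms(4)[of k] by eventually_elim (rule le_less_trans)
qed

lemma morrey_closed_vanishing_class:
  fixes \<Phi> :: "('a::euclidean_space \<Rightarrow> real) \<Rightarrow> 'b \<Rightarrow> ennreal"
  assumes p: "p > 0"
    and \<Phi>_bound: "\<And>u v w. u \<in> borel_measurable lebesgue \<Longrightarrow> v \<in> borel_measurable lebesgue \<Longrightarrow>
      (\<And>y. \<bar>w y\<bar> \<le> \<bar>u y\<bar> + \<bar>v y\<bar>) \<Longrightarrow>
      \<forall>\<^sub>F t in F. \<Phi> w t \<le> ennreal (2 powr p) * (\<Phi> u t + morrey_sup p lam v)"
  shows "morrey_closed p lam {f \<in> morrey_space p lam. (\<Phi> f \<longlongrightarrow> 0) F}"
  unfolding morrey_closed_def
proof (intro allI impI, elim conjE)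
  fix g :: "nat \<Rightarrow> 'a \<Rightarrow> real" and f
  assume g: "\<forall>k. g k \<in> {f \<in> morrey_space p lam. (\<Phi> f \<longlongrightarrow> 0) F}"
    and f: "f \<in> morrey_space p lam"
    and lim: "((\<lambda>k. morrey_norm p lam (\<lambda>y. g k y - f y)) \<longlongrightarrow> 0) sequentially"
  have g_meas: "g k \<in> borel_measurable lebesgue" for k
    using g by (auto simp: morrey_space_def)
  have "(\<Phi> f \<longlongrightarrow> 0) F"
  proof (rule tendsto_zero_by_approximation)
    show "((\<lambda>k. morrey_sup p lam (\<lambda>y. g k y - f y)) \<longlongrightarrow> 0) sequentially"
      using g f lim by (intro morrey_sup_diff_tendsto_zero p) auto
    show "\<forall>\<^sub>F t in F. \<Phi> f t \<le> ennreal (2 powr p) * (\<Phi> (g k) t + morrey_sup p lam (\<lambda>y. g k y - f y))" for k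
      using f g_meas by (intro \<Phi>_bound) (auto simp: morrey_space_def)
  qed (use g in auto)
  with f show "f \<in> {f \<in> morrey_space p lam. (\<Phi> f \<longlongrightarrow> 0) F}" by simp
qed

theorem lemma3p7:
  fixes p lam :: real
  assumes "0 \<le> lam" and "lam < real DIM('a::euclidean_space)" and "1 \<le> p"
  shows "morrey_closed p lam (V0_morrey p lam :: ('a \<Rightarrow> real) set)
       \<and> morrey_closed p lam (Vinf_morrey p lam :: ('a \<Rightarrow> real) set)
       \<and> morrey_closed p lam (Vstar_morrey p lam :: ('a \<Rightarrow> real) set)
       \<and> morrey_closed p lam (V0inf_star_morrey p lam :: ('a \<Rightarrow> real) set)"
proof -
  have p: "p > 0" using assms(3) by simp
  have V0: "morrey_closed p lam (V0_morrey p lam :: ('a \<Rightarrow> real) set)"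
    unfolding V0_morrey_def
    by (rule morrey_closed_vanishing_class[OF p])
      (auto intro: eventually_mono[OF eventually_at_right_less] sup_morrey_M_quasi_triangle p)
  have Vinf: "morrey_closed p lam (Vinf_morrey p lam :: ('a \<Rightarrow> real) set)"
    unfolding Vinf_morrey_def
    by (rule morrey_closed_vanishing_class[OF p])
      (auto intro: eventually_mono[OF eventually_gt_at_top] sup_morrey_M_quasi_triangle p)
  have Vstar: "morrey_closed p lam (Vstar_morrey p lam :: ('a \<Rightarrow> real) set)"
    unfolding Vstar_morrey_def
  proof (rule morrey_closed_vanishing_class[OF p], intro always_eventually allI)
    fix u v w :: "'a \<Rightarrow> real" and N
    assume "u \<in> borel_measurable lebesgue" "v \<in> borel_measurable lebesgue"
      and "\<And>y. \<bar>w y\<bar> \<le> \<bar>u y\<bar> + \<bar>v y\<bar>"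
    then have "morrey_A p w N \<le> ennreal (2 powr p) * (morrey_A p u N + morrey_A p v N)"
      by (rule morrey_A_quasi_triangle[OF p])
    also have "\<dots> \<le> ennreal (2 powr p) * (morrey_A p u N + morrey_sup p lam v)"
      by (intro mult_left_mono add_mono morrey_A_le_morrey_sup) auto
    finally show "morrey_A p w N \<le> ennreal (2 powr p) * (morrey_A p u N + morrey_sup p lam v)" .
  qed
  have "morrey_closed p lam (V0inf_star_morrey p lam :: ('a \<Rightarrow> real) set)"
    using V0 Vinf Vstar unfolding morrey_closed_def V0inf_star_morrey_def by blast
  with V0 Vinf Vstar show ?thesis by blast
qed

end
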